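(* Let $S$ be a completely nonunitary partial isometry on a Hilbert space $\mathcal H$ with $\dim\mathcal K=\dim\tilde{\mathcal K}$ (possibly infinite), where $\mathcal K=(S\mathcal H)^\perp$ and $\tilde{\mathcal K}=\ker S$. For a unitary $A:\tilde{\mathcal K}\to\mathcal K$ define $U_A h=Sh$ for $h\perp\tilde{\mathcal K}$ and $U_Ah=Ah$ for $h\in\tilde{\mathcal K}$. Then $U_A$ is unitary and $\overline{\operatorname{span}}\{U_A^n k: k\in\mathcal K,\ n\in\mathbb Z\}=\mathcal H$. In particular, if $\dim\mathcal K=\dim\tilde{\mathcal K}=1$, then for any unit vector $k\in\mathcal K$ and any $\alpha\in\mathbb T$, with $U_\alpha$ defined by $A\tilde k=\alpha k$ for a unit vector $\tilde k\in\tilde{\mathcal K}$, one has $\overline{\operatorname{span}}\{U_\alpha^n k: n\in\mathbb Z\}=\mathcal H$.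
   Context: A contraction is completely nonunitary (c.n.u.) if there is no nonzero reducing subspace on which it is unitary. For a partial isometry $S$, $S\mathcal H$ is its final space and $(\ker S)^\perp$ its initial space. *)

theory Defs
  imports "HOL-Analysis.Analysis"
begin

text \<open>The distribution has no complex inner product spaces, so we introduce them as a
type class: a real normed vector space with a complex scalar multiplication extending
the real one and a sesquilinear, conjugate-symmetric inner product (linear in the second
argument) inducing the norm.\<close>

class complex_inner = real_normed_vector +
  fixes scaleC :: "complex \<Rightarrow> 'a \<Rightarrow> 'a"
    and cinner :: "'a \<Rightarrow> 'a \<Rightarrow> complex"
  assumes scaleC_add_right: "scaleC c (x + y) = scaleC c x + scaleC c y"
    and scaleC_add_left: "scaleC (c + d) x = scaleC c x + scaleC d x"
    and scaleC_scaleC: "scaleC c (scaleC d x) = scaleC (c * d) x"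
    and scaleC_one: "scaleC 1 x = x"
    and scaleR_scaleC: "scaleR r x = scaleC (complex_of_real r) x"
    and cinner_add_right: "cinner x (y + z) = cinner x y + cinner x z"
    and cinner_scaleC_right: "cinner x (scaleC c y) = c * cinner x y"
    and cinner_commute: "cinner y x = cnj (cinner x y)"
    and cinner_self: "cinner x x = complex_of_real ((norm x)\<^sup>2)"

class chilbert_space = complex_inner + complete_space

definition clinear :: "('a::complex_inner \<Rightarrow> 'b::complex_inner) \<Rightarrow> bool" where
  "clinear f \<longleftrightarrow> (\<forall>x y. f (x + y) = f x + f y) \<and> (\<forall>c x. f (scaleC c x) = scaleC c (f x))"

definition cspan :: "'a::complex_inner set \<Rightarrow> 'a set" where
  "cspan B = {(\<Sum>x\<in>F. scaleC (c x) x) | F c. finite F \<and> F \<subseteq> B}"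

definition csubspace :: "'a::complex_inner set \<Rightarrow> bool" where
  "csubspace M \<longleftrightarrow> 0 \<in> M \<and> (\<forall>x\<in>M. \<forall>y\<in>M. x + y \<in> M) \<and> (\<forall>c. \<forall>x\<in>M. scaleC c x \<in> M)"

definition closed_csubspace :: "'a::complex_inner set \<Rightarrow> bool" where
  "closed_csubspace M \<longleftrightarrow> csubspace M \<and> closed M"

definition orth :: "'a::complex_inner set \<Rightarrow> 'a set" where
  "orth M = {y. \<forall>x\<in>M. cinner x y = 0}"

definition ker :: "('a::complex_inner \<Rightarrow> 'b::complex_inner) \<Rightarrow> 'a set" where
  "ker T = {x. T x = 0}"

definition bounded_clinear :: "('a::complex_inner \<Rightarrow> 'b::complex_inner) \<Rightarrow> bool" where
  "bounded_clinear T \<longleftrightarrow> clinear T \<and> (\<exists>K. \<forall>x. norm (T x) \<le> norm x * K)"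

definition partial_isometry :: "('a::chilbert_space \<Rightarrow> 'a) \<Rightarrow> bool" where
  "partial_isometry S \<longleftrightarrow> bounded_clinear S \<and> (\<forall>x\<in>orth (ker S). norm (S x) = norm x)"

definition contraction :: "('a::chilbert_space \<Rightarrow> 'a) \<Rightarrow> bool" where
  "contraction T \<longleftrightarrow> bounded_clinear T \<and> (\<forall>x. norm (T x) \<le> norm x)"

definition reducing_subspace :: "('a::chilbert_space \<Rightarrow> 'a) \<Rightarrow> 'a set \<Rightarrow> bool" where
  "reducing_subspace T M \<longleftrightarrow> closed_csubspace M \<and> T ` M \<subseteq> M \<and> T ` orth M \<subseteq> orth M"

definition unitary_on :: "('a::chilbert_space \<Rightarrow> 'a) \<Rightarrow> 'a set \<Rightarrow> bool" where
  "unitary_on T M \<longleftrightarrow> (\<forall>x\<in>M. norm (T x) = norm x) \<and> T ` M = M"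

definition completely_nonunitary :: "('a::chilbert_space \<Rightarrow> 'a) \<Rightarrow> bool" where
  "completely_nonunitary T \<longleftrightarrow> contraction T \<and>
     (\<forall>M. reducing_subspace T M \<and> unitary_on T M \<longrightarrow> M = {0})"

definition unitary :: "('a::chilbert_space \<Rightarrow> 'a) \<Rightarrow> bool" where
  "unitary U \<longleftrightarrow> clinear U \<and> (\<forall>x. norm (U x) = norm x) \<and> surj U"

definition unitary_between :: "('a::chilbert_space \<Rightarrow> 'a) \<Rightarrow> 'a set \<Rightarrow> 'a set \<Rightarrow> bool" where
  "unitary_between A M N \<longleftrightarrow>
     (\<forall>x\<in>M. \<forall>y\<in>M. A (x + y) = A x + A y) \<and> (\<forall>c. \<forall>x\<in>M. A (scaleC c x) = scaleC c (A x)) \<and>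
     (\<forall>x\<in>M. norm (A x) = norm x) \<and> A ` M = N"

definition orthonormal_basis :: "'a::chilbert_space set \<Rightarrow> 'a set \<Rightarrow> bool" where
  "orthonormal_basis M B \<longleftrightarrow> B \<subseteq> M \<and> (\<forall>x\<in>B. cinner x x = 1) \<and>
     (\<forall>x\<in>B. \<forall>y\<in>B. x \<noteq> y \<longrightarrow> cinner x y = 0) \<and> closure (cspan B) = M"

definition same_hilbert_dim :: "'a::chilbert_space set \<Rightarrow> 'a set \<Rightarrow> bool" where
  "same_hilbert_dim M N \<longleftrightarrow>
     (\<exists>B C. orthonormal_basis M B \<and> orthonormal_basis N C \<and> (\<exists>f. bij_betw f B C))"

definition hilbert_dim_one :: "'a::chilbert_space set \<Rightarrow> bool" where
  "hilbert_dim_one M \<longleftrightarrow> (\<exists>B. orthonormal_basis M B \<and> card B = 1)"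

definition zpow :: "('a \<Rightarrow> 'a) \<Rightarrow> int \<Rightarrow> 'a \<Rightarrow> 'a" where
  "zpow U n = (if 0 \<le> n then U ^^ nat n else (inv U) ^^ nat (- n))"

end

theory Submission
  imports Defs
begin

(* Let K = (range S)-perp and ker S be the two defect spaces of the partial isometry S.
   1. Gluing S on (ker S)-perp with a unitary A : ker S -> K gives an operator U that is
      isometric (the two pieces act between mutually orthogonal subspaces) and onto
      (range S + K is the whole space), hence unitary.
   2. Let M be the closed span of the two-sided U-orbit of K.  M is invariant under U and
      U^-1, hence so is N = M-perp.  Since A maps ker S onto K, ker S = U^-1 K lies in M,
      so N lies in the initial space of S, where S agrees with U.  It follows that N reduces
      S and S is unitary on N; complete non-unitarity forces N = {0}, i.e. M is everything.
   3. In dimension one every vector of K is a multiple of the unit vector k, so the orbit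
      of k alone already spans the orbit of K, and U restricted to ker S is automatically a
      unitary onto K.
   The hypothesis dim K = dim (ker S) only guarantees that some unitary A exists; the
   argument itself does not use it. *)

section \<open>Algebra of complex inner product spaces\<close>

lemma scaleC_zero_left [simp]: "scaleC 0 (x::'a::complex_inner) = 0"
proof -
  have "scaleC 0 x = scaleC 0 x + scaleC 0 x" using scaleC_add_left[of 0 0 x] by simp
  then show ?thesis by simp
qed

lemma scaleC_zero_right [simp]: "scaleC c (0::'a::complex_inner) = 0"
proof -
  have "scaleC c (0::'a) = scaleC c 0 + scaleC c 0" using scaleC_add_right[of c 0 0] by simp
  then show ?thesis by simp
qed

lemma scaleC_minus_left: "scaleC (- c) (x::'a::complex_inner) = - scaleC c x"
  using minus_unique[of "scaleC c x" "scaleC (-c) x"] scaleC_add_left[of c "-c" x] by simp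

lemma scaleC_sum_right: "scaleC c (sum g F) = (\<Sum>i\<in>F. scaleC c (g i :: 'a::complex_inner))"
  by (induction F rule: infinite_finite_induct) (auto simp: scaleC_add_right)

lemma cinner_add_left: "cinner (x + y) (z::'a::complex_inner) = cinner x z + cinner y z"
  by (metis cinner_commute cinner_add_right complex_cnj_add)

lemma cinner_scaleC_left: "cinner (scaleC c x) (y::'a::complex_inner) = cnj c * cinner x y"
  by (metis cinner_commute cinner_scaleC_right complex_cnj_mult)

lemma cinner_zero_right [simp]: "cinner x (0::'a::complex_inner) = 0"
  using cinner_add_right[of x 0 0] by simp

lemma cinner_zero_left [simp]: "cinner 0 (x::'a::complex_inner) = 0"
  using cinner_add_left[of 0 0 x] by simp

lemma cinner_minus_right: "cinner x (- y::'a::complex_inner) = - cinner x y"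
  using minus_unique[of "cinner x y" "cinner x (-y)"] cinner_add_right[of x y "-y"] by simp

lemma cinner_minus_left: "cinner (- x) (y::'a::complex_inner) = - cinner x y"
  using minus_unique[of "cinner x y" "cinner (-x) y"] cinner_add_left[of x "-x" y] by simp

lemma cinner_diff_right: "cinner x (y - z::'a::complex_inner) = cinner x y - cinner x z"
  using cinner_add_right[of x y "-z"] cinner_minus_right[of x z] by simp

lemma cinner_diff_left: "cinner (x - y) (z::'a::complex_inner) = cinner x z - cinner y z"
  using cinner_add_left[of x "-y" z] cinner_minus_left[of y z] by simp

lemma cinner_scaleR_left: "cinner (scaleR r x) (y::'a::complex_inner) = scaleR r (cinner x y)"
  by (simp add: scaleR_scaleC cinner_scaleC_left scaleR_conv_of_real)

lemma cinner_scaleR_right: "cinner x (scaleR r y::'a::complex_inner) = scaleR r (cinner x y)"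
  by (simp add: scaleR_scaleC cinner_scaleC_right scaleR_conv_of_real)

lemma cinner_zero_sym: "cinner x (y::'a::complex_inner) = 0 \<Longrightarrow> cinner y x = 0"
  by (metis cinner_commute complex_cnj_zero)

lemma norm_sq_cinner: "(norm (x::'a::complex_inner))^2 = Re (cinner x x)"
  by (simp add: cinner_self)

lemma norm_add_sq:
  "(norm (x + y::'a::complex_inner))^2 = (norm x)^2 + (norm y)^2 + 2 * Re (cinner x y)"
proof -
  have "cinner (x+y) (x+y) = cinner x x + cinner y y + (cinner x y + cnj (cinner x y))"
    by (simp add: cinner_add_left cinner_add_right algebra_simps cinner_commute[of x y])
  then have "Re (cinner (x+y) (x+y)) = Re (cinner x x) + Re (cinner y y) + 2 * Re (cinner x y)"
    by simp
  then show ?thesis by (simp add: norm_sq_cinner)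
qed

lemma pythagoras:
  "cinner x (y::'a::complex_inner) = 0 \<Longrightarrow> (norm (x + y))^2 = (norm x)^2 + (norm y)^2"
  by (simp add: norm_add_sq)

lemma parallelogram:
  "(norm (u - v::'a::complex_inner))^2 + (norm (u + v))^2 = 2*(norm u)^2 + 2*(norm v)^2"
proof -
  have "(norm (u + (-v)))^2 = (norm u)^2 + (norm v)^2 - 2 * Re (cinner u v)"
    using norm_add_sq[of u "-v"] by (simp add: cinner_minus_right)
  then show ?thesis using norm_add_sq[of u v] by simp
qed

lemma norm_scaleC: "norm (scaleC c (x::'a::complex_inner)) = cmod c * norm x"
proof -
  have "cinner (scaleC c x) (scaleC c x) = cnj c * c * cinner x x"
    by (simp add: cinner_scaleC_left cinner_scaleC_right)
  also have "cnj c * c = complex_of_real ((cmod c)^2)"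
    using complex_norm_square[of c] by (simp add: mult.commute)
  finally have "cinner (scaleC c x) (scaleC c x) = complex_of_real ((cmod c)^2 * (norm x)^2)"
    by (simp add: cinner_self)
  then have "(norm (scaleC c x))^2 = (cmod c)^2 * (norm x)^2"
    by (simp add: norm_sq_cinner)
  then show ?thesis
    by (metis abs_of_nonneg norm_ge_zero real_sqrt_abs zero_le_mult_iff real_sqrt_mult)
qed

text \<open>The squared distance from z to a point on the line through y, moved by a real
  multiple t of the inner product w; used to show that best approximations are orthogonal.\<close>
lemma norm_diff_scale_sq:
  fixes y z :: "'a::complex_inner"
  defines "w \<equiv> cinner y z"
  shows "(norm (z - scaleC (of_real t * w) y))^2
           = (norm z)^2 - 2*t*(cmod w)^2 + t^2*(cmod w)^2*(norm y)^2"
proof -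
  define s where "s = complex_of_real t * w"
  have zy: "cinner z y = cnj w" by (simp add: w_def cinner_commute[of z y])
  have ww: "cnj w * w = complex_of_real ((cmod w)^2)"
    using complex_norm_square[of w] by (simp add: mult.commute)
  have "cinner (z - scaleC s y) (z - scaleC s y)
      = cinner z z - s * cinner z y - cnj s * cinner y z + cnj s * s * cinner y y"
    by (simp add: cinner_diff_left cinner_diff_right cinner_scaleC_left cinner_scaleC_right
        algebra_simps)
  also have "\<dots> = cinner z z - 2 * of_real t * (cnj w * w) + (of_real t)^2 * (cnj w * w) * cinner y y"
    by (simp add: s_def zy w_def[symmetric] algebra_simps power2_eq_square)
  also have "\<dots> = complex_of_real ((norm z)^2 - 2*t*(cmod w)^2 + t^2*(cmod w)^2*(norm y)^2)"
    by (simp add: ww cinner_self)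
  finally show ?thesis unfolding s_def by (simp add: norm_sq_cinner)
qed

text \<open>Cauchy-Schwarz: the special case t = 1 / |y|^2 of the previous identity.\<close>
lemma cauchy_schwarz: "cmod (cinner x (y::'a::complex_inner)) \<le> norm x * norm y"
proof (cases "y = 0")
  case True then show ?thesis by simp
next
  case False
  then have ny: "norm y > 0" by simp
  define t where "t = 1 / (norm y)^2"
  have "0 \<le> (norm (x - scaleC (of_real t * cinner y x) y))^2" by simp
  also have "\<dots> = (norm x)^2 - 2*t*(cmod (cinner y x))^2 + t^2*(cmod (cinner y x))^2*(norm y)^2"
    by (rule norm_diff_scale_sq)
  also have "\<dots> = (norm x)^2 - (cmod (cinner y x))^2 / (norm y)^2"
    using ny by (simp add: t_def power2_eq_square field_simps)
  finally have "(cmod (cinner y x))^2 \<le> (norm x * norm y)^2"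
    using ny by (simp add: field_simps power_mult_distrib)
  moreover have "cmod (cinner y x) = cmod (cinner x y)" by (simp add: cinner_commute[of y x])
  ultimately show ?thesis using power2_le_imp_le by fastforce
qed

lemma bounded_bilinear_cinner: "bounded_bilinear (cinner :: 'a::complex_inner \<Rightarrow> 'a \<Rightarrow> complex)"
proof
  show "\<exists>K. \<forall>a b :: 'a. norm (cinner a b) \<le> norm a * norm b * K"
    using cauchy_schwarz by (intro exI[of _ 1]) auto
qed (simp_all add: cinner_add_left cinner_add_right cinner_scaleR_left cinner_scaleR_right)

lemma bounded_linear_scaleC: "bounded_linear (scaleC c :: 'a::complex_inner \<Rightarrow> 'a)"
  by (rule bounded_linear_intro[where K="cmod c"])
    (simp_all add: scaleC_add_right scaleR_scaleC scaleC_scaleC mult.commute norm_scaleC)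

lemma continuous_scaleC_left: "continuous_on UNIV (\<lambda>c. scaleC c (x::'a::complex_inner))"
proof -
  have "bounded_linear (\<lambda>c. scaleC c x)"
    by (rule bounded_linear_intro[where K="norm x"])
      (simp_all add: scaleC_add_left scaleR_scaleC scaleC_scaleC scaleR_conv_of_real norm_scaleC)
  then show ?thesis using linear_continuous_on by blast
qed

lemma clinear_add: "clinear f \<Longrightarrow> f (x + y) = f x + f y"
  unfolding clinear_def by blast

lemma clinear_scaleC: "clinear f \<Longrightarrow> f (scaleC c x) = scaleC c (f x)"
  unfolding clinear_def by blast

lemma clinear_zero: "clinear f \<Longrightarrow> f 0 = 0"
  using clinear_scaleC[of f 0 0] by simp

lemma clinear_minus: "clinear f \<Longrightarrow> f (- x) = - f x"
  using clinear_scaleC[of f "-1" x] by (simp add: scaleC_minus_left scaleC_one)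

lemma clinear_diff: "clinear f \<Longrightarrow> f (x - y) = f x - f y"
  using clinear_add[of f x "-y"] clinear_minus[of f y] by simp

lemma clinear_sum: "clinear f \<Longrightarrow> f (sum g F) = (\<Sum>i\<in>F. f (g i))"
  by (induction F rule: infinite_finite_induct) (auto simp: clinear_zero clinear_add)

lemma clinear_bounded_linear:
  assumes "clinear f" "\<And>x. norm (f x) \<le> norm x * K"
  shows "bounded_linear f"
  using assms unfolding clinear_def
  by (intro bounded_linear_intro[where K=K]) (auto simp: scaleR_scaleC)

lemma bounded_clinear_bounded_linear: "bounded_clinear f \<Longrightarrow> bounded_linear f"
  unfolding bounded_clinear_def using clinear_bounded_linear by blast

lemma clinear_funpow: "clinear (f::'a::complex_inner \<Rightarrow> 'a) \<Longrightarrow> clinear (f ^^ n)"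
  by (induction n) (simp_all add: clinear_def)

lemma clinear_inv:
  assumes "clinear f" "bij f"
  shows "clinear (inv f)"
proof -
  have right_inv: "f (inv f z) = z" for z using assms(2) by (simp add: bij_is_surj surj_f_inv_f)
  have "f (inv f x + inv f y) = x + y" for x y using clinear_add[OF assms(1)] right_inv by simp
  moreover have "f (scaleC c (inv f x)) = scaleC c x" for c x
    using clinear_scaleC[OF assms(1)] right_inv by simp
  ultimately show ?thesis
    unfolding clinear_def using assms(2) bij_inv_eq_iff by metis
qed

lemma polarization:
  fixes U :: "'a::complex_inner \<Rightarrow> 'b::complex_inner"
  assumes U: "clinear U" "\<And>x. norm (U x) = norm x"
  shows "cinner (U x) (U y) = cinner x y"
proof -
  have re: "Re (cinner (U a) (U b)) = Re (cinner a b)" for a b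
  proof -
    have "norm (U a + U b) = norm (a + b)" using U(2)[of "a+b"] clinear_add[OF U(1), of a b] by simp
    then show ?thesis using norm_add_sq[of "U a" "U b"] norm_add_sq[of a b] U(2) by simp
  qed
  have "Re (cinner (U x) (U (scaleC \<i> y))) = Re (cinner x (scaleC \<i> y))" by (rule re)
  then have im: "Im (cinner (U x) (U y)) = Im (cinner x y)"
    by (simp add: clinear_scaleC[OF U(1)] cinner_scaleC_right)
  show ?thesis using re[of x y] im by (simp add: complex_eqI)
qed

lemma csubspace_sum: "csubspace M \<Longrightarrow> (\<And>i. i \<in> F \<Longrightarrow> g i \<in> M) \<Longrightarrow> sum g F \<in> M"
  by (induction F rule: infinite_finite_induct) (auto simp: csubspace_def)

lemma csubspace_diff: "csubspace M \<Longrightarrow> x \<in> M \<Longrightarrow> y \<in> M \<Longrightarrow> x - y \<in> M"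
  unfolding csubspace_def by (metis diff_conv_add_uminus scaleC_minus_left scaleC_one)

lemma csubspace_scaleR: "csubspace M \<Longrightarrow> x \<in> M \<Longrightarrow> scaleR r x \<in> M"
  unfolding csubspace_def by (simp add: scaleR_scaleC)

lemma csubspace_closure:
  assumes "csubspace M"
  shows "csubspace (closure (M::'a::complex_inner set))"
  unfolding csubspace_def
proof safe
  show "0 \<in> closure M" using assms closure_subset unfolding csubspace_def by blast
next
  fix x y assume "x \<in> closure M" "y \<in> closure M"
  then obtain f g where "\<forall>n. f n \<in> M" "f \<longlonglongrightarrow> x" "\<forall>n. g n \<in> M" "g \<longlonglongrightarrow> y"
    unfolding closure_sequential by blast
  then show "x + y \<in> closure M" unfolding closure_sequential
    using assms unfolding csubspace_def
    by (intro exI[of _ "\<lambda>n. f n + g n"]) (auto intro: tendsto_add)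
next
  fix c x assume "x \<in> closure M"
  then obtain f where "\<forall>n. f n \<in> M" "f \<longlonglongrightarrow> x"
    unfolding closure_sequential by blast
  then show "scaleC c x \<in> closure M" unfolding closure_sequential
    using assms bounded_linear.tendsto[OF bounded_linear_scaleC]
    unfolding csubspace_def by (intro exI[of _ "\<lambda>n. scaleC c (f n)"]) auto
qed

lemma cspan_superset: "B \<subseteq> cspan B"
proof
  fix x assume "x \<in> B"
  then show "x \<in> cspan B" unfolding cspan_def
    by (auto intro!: exI[of _ "{x}"] exI[of _ "\<lambda>_. 1"] simp: scaleC_one)
qed

lemma cspan_minimal: "csubspace M \<Longrightarrow> B \<subseteq> M \<Longrightarrow> cspan B \<subseteq> M"
  unfolding cspan_def by (auto intro!: csubspace_sum) (auto simp: csubspace_def)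

lemma sum_extend_coeff:
  assumes "finite G" "F \<subseteq> G"
  shows "(\<Sum>x\<in>F. scaleC (c x) x)
           = (\<Sum>x\<in>G. scaleC (if x \<in> F then c x else 0) (x::'a::complex_inner))"
proof -
  have "(\<Sum>x\<in>G. scaleC (if x \<in> F then c x else 0) x) = (\<Sum>x\<in>F. scaleC (if x \<in> F then c x else 0) x)"
    using assms by (intro sum.mono_neutral_right) auto
  then show ?thesis by simp
qed

lemma csubspace_cspan: "csubspace (cspan B)"
  unfolding csubspace_def
proof safe
  show "0 \<in> cspan B" unfolding cspan_def by (auto intro!: exI[of _ "{}"])
next
  fix x y assume "x \<in> cspan B" "y \<in> cspan B"
  then obtain F c G d where F: "finite F" "F \<subseteq> B" "x = (\<Sum>x\<in>F. scaleC (c x) x)"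
    and G: "finite G" "G \<subseteq> B" "y = (\<Sum>x\<in>G. scaleC (d x) x)"
    unfolding cspan_def by auto
  define e where "e x = (if x \<in> F then c x else 0) + (if x \<in> G then d x else 0)" for x
  have "x + y = (\<Sum>z\<in>F\<union>G. scaleC (e z) z)"
    unfolding F(3) G(3) e_def
    using sum_extend_coeff[of "F\<union>G" F c] sum_extend_coeff[of "F\<union>G" G d] F G
    by (simp add: scaleC_add_left sum.distrib)
  then show "x + y \<in> cspan B" unfolding cspan_def using F G by blast
next
  fix a x assume "x \<in> cspan B"
  then obtain F c where F: "finite F" "F \<subseteq> B" "x = (\<Sum>x\<in>F. scaleC (c x) x)"
    unfolding cspan_def by auto
  have "scaleC a x = (\<Sum>z\<in>F. scaleC (a * c z) z)"
    unfolding F(3) by (simp add: scaleC_sum_right scaleC_scaleC)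
  then show "scaleC a x \<in> cspan B" unfolding cspan_def using F
    by (auto intro!: exI[of _ F] exI[of _ "\<lambda>z. a * c z"])
qed

lemma closed_csubspace_closure_cspan: "closed_csubspace (closure (cspan B))"
  by (simp add: closed_csubspace_def csubspace_closure csubspace_cspan)

lemma clinear_image_cspan:
  assumes "clinear f" "f ` B \<subseteq> cspan C"
  shows "f ` cspan B \<subseteq> cspan C"
proof
  fix y assume "y \<in> f ` cspan B"
  then obtain F c where F: "finite F" "F \<subseteq> B" "y = f (\<Sum>x\<in>F. scaleC (c x) x)"
    unfolding cspan_def by auto
  have "y = (\<Sum>x\<in>F. scaleC (c x) (f x))"
    using assms(1) by (simp add: F(3) clinear_sum clinear_scaleC)
  also have "\<dots> \<in> cspan C"
    using F assms(2) csubspace_cspan[of C] unfolding csubspace_def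
    by (intro csubspace_sum[OF csubspace_cspan]) blast
  finally show "y \<in> cspan C" .
qed

lemma closure_cspan_invariant:
  assumes "bounded_linear f" "clinear f" "f ` G \<subseteq> G"
  shows "f ` closure (cspan G) \<subseteq> closure (cspan G)"
proof -
  have "f ` cspan G \<subseteq> cspan G"
    using clinear_image_cspan[OF assms(2)] assms(3) cspan_superset by blast
  then have "f ` cspan G \<subseteq> closure (cspan G)" using closure_subset by blast
  then show ?thesis
    by (intro image_closure_subset linear_continuous_on assms(1)) auto
qed

lemma closed_orth: "closed (orth (M::'a::complex_inner set))"
proof -
  have "orth M = (\<Inter>x\<in>M. {y. cinner x y = 0})" unfolding orth_def by auto
  moreover have "closed {y. cinner x y = 0}" for x :: 'a
    by (intro closed_Collect_eq continuous_on_const linear_continuous_on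
        bounded_bilinear.bounded_linear_right[OF bounded_bilinear_cinner])
  ultimately show ?thesis by auto
qed

lemma csubspace_orth: "csubspace (orth (M::'a::complex_inner set))"
  unfolding csubspace_def orth_def by (auto simp: cinner_add_right cinner_scaleC_right)

lemma closed_csubspace_orth: "closed_csubspace (orth M)"
  by (simp add: closed_csubspace_def closed_orth csubspace_orth)

lemma orth_antimono: "M \<subseteq> N \<Longrightarrow> orth N \<subseteq> orth M"
  unfolding orth_def by auto

lemma orth_orth_sup: "M \<subseteq> orth (orth M)"
  unfolding orth_def by (auto intro: cinner_zero_sym)

lemma orth_invariant_adjoint:
  assumes adj: "\<And>x y. cinner (g x) y = cinner x (f y)" and inv: "g ` M \<subseteq> M"
  shows "f ` orth M \<subseteq> orth M"
proof
  fix y assume "y \<in> f ` orth M"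
  then obtain h where h: "h \<in> orth M" "y = f h" by blast
  have "cinner x (f h) = 0" if "x \<in> M" for x
    using adj[of x h] inv that h(1) unfolding orth_def by auto
  then show "y \<in> orth M" using h(2) unfolding orth_def by blast
qed

section \<open>The projection theorem\<close>

lemma parallelogram_midpoint_bound:
  fixes x a b :: "'a::complex_inner"
  assumes "d \<le> norm (x - scaleR (1/2) (a + b))" "0 \<le> d"
  shows "(norm (a - b))^2 \<le> 2*(norm (x - a))^2 + 2*(norm (x - b))^2 - 4*d^2"
proof -
  have "(x - a) + (x - b) = scaleR 2 (x - scaleR (1/2) (a + b))"
    by (simp add: algebra_simps scaleR_2)
  then have "2 * d \<le> norm ((x - a) + (x - b))" using assms(1) by simp
  then have "4 * d^2 \<le> (norm ((x - a) + (x - b)))^2"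
    using assms(2) power_mono[of "2*d" _ 2] by (simp add: power_mult_distrib)
  moreover have "(norm ((x - a) - (x - b)))^2 = (norm (a - b))^2"
    using norm_minus_commute[of b a] by simp
  ultimately show ?thesis using parallelogram[of "x - a" "x - b"] by linarith
qed

lemma minimizing_sequence_Cauchy:
  fixes M :: "'a::complex_inner set"
  assumes sub: "csubspace M" and d0: "0 \<le> d"
    and dle: "\<And>m. m \<in> M \<Longrightarrow> d \<le> norm (x - m)"
    and f: "\<And>n. f n \<in> M" "\<And>n. norm (x - f n) < d + inverse (real (Suc n))"
  shows "Cauchy f"
proof (rule metric_CauchyI)
  fix e :: real assume e: "0 < e"
  obtain N :: nat where N: "(8*d+4) / e^2 < real N" using reals_Archimedean2 by blast
  have Npos: "0 < real N"
    using N e d0 by (smt (verit) divide_nonneg_pos zero_less_power)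
  define \<epsilon> where "\<epsilon> = inverse (real (Suc N))"
  have eps: "0 < \<epsilon>" "\<epsilon> \<le> 1" by (auto simp: \<epsilon>_def inverse_le_1_iff)
  have small: "(8*d+4) * \<epsilon> < e^2"
  proof -
    have "(8*d+4) * \<epsilon> \<le> (8*d+4) / real N"
      using Npos d0 by (simp add: \<epsilon>_def divide_simps)
    also have "\<dots> < e^2" using N e Npos by (simp add: divide_simps mult.commute)
    finally show ?thesis .
  qed
  show "\<exists>N. \<forall>m\<ge>N. \<forall>n\<ge>N. dist (f m) (f n) < e"
  proof (intro exI allI impI)
    fix m n assume mn: "N \<le> m" "N \<le> n"
    have em: "inverse (real (Suc m)) \<le> \<epsilon>" "inverse (real (Suc n)) \<le> \<epsilon>"
      using mn by (auto simp: \<epsilon>_def intro!: le_imp_inverse_le)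
    define p where "p = norm (x - f m) - d"
    define q where "q = norm (x - f n) - d"
    have p: "0 \<le> p" "p \<le> \<epsilon>" using dle[OF f(1)[of m]] f(2)[of m] em by (auto simp: p_def)
    have q: "0 \<le> q" "q \<le> \<epsilon>" using dle[OF f(1)[of n]] f(2)[of n] em by (auto simp: q_def)
    have "scaleR (1/2) (f m + f n) \<in> M"
      using sub f(1) by (intro csubspace_scaleR) (auto simp: csubspace_def)
    then have "(norm (f m - f n))^2 \<le> 2*(d+p)^2 + 2*(d+q)^2 - 4*d^2"
      using parallelogram_midpoint_bound[OF dle d0] by (simp add: p_def q_def)
    also have "\<dots> = 4*d*p + 2*p^2 + 4*d*q + 2*q^2" by (simp add: algebra_simps power2_eq_square)
    also have "\<dots> \<le> (8*d+4) * \<epsilon>"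
    proof -
      have "p^2 \<le> \<epsilon>" "q^2 \<le> \<epsilon>" using p q eps
        by (metis order_trans mult_le_one power2_eq_square mult_right_mono mult_1_left)+
      moreover have "d*p \<le> d*\<epsilon>" "d*q \<le> d*\<epsilon>" using p q d0 by (auto intro: mult_left_mono)
      ultimately show ?thesis by (simp add: algebra_simps)
    qed
    also have "\<dots> < e^2" by (rule small)
    finally have "(dist (f m) (f n))^2 < e^2" by (simp add: dist_norm)
    then show "dist (f m) (f n) < e" using e by (simp add: power_less_imp_less_base)
  qed
qed

lemma nearest_point_orth:
  fixes M :: "'a::complex_inner set"
  assumes sub: "csubspace M" and mM: "m \<in> M"
    and nearest: "\<And>y. y \<in> M \<Longrightarrow> norm (x - m) \<le> norm (x - y)"
  shows "x - m \<in> orth M"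
  unfolding orth_def
proof safe
  fix y assume yM: "y \<in> M"
  define z where "z = x - m"
  define w where "w = cinner y z"
  define t where "t = 1 / ((norm y)^2 + 1)"
  have t: "0 < t" "t * (norm y)^2 < 1"
    by (auto simp: t_def divide_simps) (smt (verit) zero_le_power2)+
  have "m + scaleC (of_real t * w) y \<in> M" using sub mM yM by (auto simp: csubspace_def)
  then have "norm z \<le> norm (z - scaleC (of_real t * w) y)"
    using nearest by (fastforce simp: z_def algebra_simps)
  then have "(norm z)^2 \<le> (norm (z - scaleC (of_real t * w) y))^2"
    by (simp add: power_mono)
  also have "\<dots> = (norm z)^2 - 2*t*(cmod w)^2 + t^2*(cmod w)^2*(norm y)^2"
    unfolding w_def by (rule norm_diff_scale_sq)
  finally have "2*t*(cmod w)^2 \<le> t*(cmod w)^2 * (t*(norm y)^2)"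
    by (simp add: power2_eq_square algebra_simps)
  also have "\<dots> \<le> t*(cmod w)^2" using t by (intro mult_left_le) auto
  finally have "(cmod w)^2 \<le> 0" using t by (simp add: algebra_simps)
  then show "cinner y (x - m) = 0" by (simp add: w_def z_def)
qed

lemma orthogonal_decomposition:
  fixes M :: "'a::chilbert_space set"
  assumes "closed_csubspace M"
  shows "\<exists>a\<in>M. \<exists>b\<in>orth M. x = a + b"
proof -
  have sub: "csubspace M" and cl: "closed M" using assms by (auto simp: closed_csubspace_def)
  have M0: "0 \<in> M" using sub by (simp add: csubspace_def)
  define d where "d = Inf ((\<lambda>m. norm (x - m)) ` M)"
  have bdd: "bdd_below ((\<lambda>m. norm (x - m)) ` M)" by (rule bdd_belowI[of _ 0]) auto
  have dle: "d \<le> norm (x - m)" if "m \<in> M" for m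
    unfolding d_def using bdd that by (rule cINF_lower)
  have d0: "0 \<le> d" unfolding d_def using M0 by (intro cINF_greatest) auto
  have "\<exists>m\<in>M. norm (x - m) < d + inverse (real (Suc n))" for n
  proof -
    have "Inf ((\<lambda>m. norm (x - m)) ` M) < d + inverse (real (Suc n))"
      unfolding d_def[symmetric] by simp
    then show ?thesis using cInf_lessD[of "(\<lambda>m. norm (x - m)) ` M"] M0 by blast
  qed
  then obtain f where f: "\<And>n. f n \<in> M" "\<And>n. norm (x - f n) < d + inverse (real (Suc n))"
    by metis
  have "Cauchy f" by (rule minimizing_sequence_Cauchy[OF sub d0 dle f]) auto
  then obtain m where lim: "f \<longlonglongrightarrow> m" using Cauchy_convergent convergent_def by blast
  have mM: "m \<in> M" using cl f(1) lim closed_sequentially by blast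
  have "norm (x - m) \<le> d"
  proof (rule tendsto_le[OF trivial_limit_sequentially])
    show "(\<lambda>n. norm (x - f n)) \<longlonglongrightarrow> norm (x - m)" by (intro tendsto_intros lim)
    show "(\<lambda>n. d + inverse (real (Suc n))) \<longlonglongrightarrow> d"
      using tendsto_add[OF tendsto_const LIMSEQ_inverse_real_of_nat] by simp
    show "\<forall>\<^sub>F n in sequentially. norm (x - f n) \<le> d + inverse (real (Suc n))"
      by (intro always_eventually allI less_imp_le[OF f(2)])
  qed
  then have "x - m \<in> orth M"
    using dle by (intro nearest_point_orth[OF sub mM]) (meson order_trans)
  then show ?thesis using mM by force
qed

lemma orth_zero_imp_UNIV:
  fixes M :: "'a::chilbert_space set"
  assumes "closed_csubspace M" "orth M = {0}"
  shows "M = UNIV"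
  using orthogonal_decomposition[OF assms(1)] assms(2) by auto

section \<open>Partial isometries\<close>

lemma partial_isometry_clinear: "partial_isometry S \<Longrightarrow> clinear S"
  unfolding partial_isometry_def bounded_clinear_def by blast

lemma partial_isometry_bounded_linear: "partial_isometry S \<Longrightarrow> bounded_linear S"
  unfolding partial_isometry_def using bounded_clinear_bounded_linear by blast

lemma partial_isometry_isometric:
  "partial_isometry S \<Longrightarrow> x \<in> orth (ker S) \<Longrightarrow> norm (S x) = norm x"
  unfolding partial_isometry_def by blast

lemma closed_csubspace_ker:
  assumes "partial_isometry (S::'a::chilbert_space \<Rightarrow> 'a)"
  shows "closed_csubspace (ker S)"
proof -
  have S: "clinear S" by (rule partial_isometry_clinear[OF assms])
  have "csubspace (ker S)" unfolding csubspace_def ker_def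
    using S by (auto simp: clinear_zero clinear_add clinear_scaleC)
  moreover have "closed (ker S)" unfolding ker_def
    by (intro closed_Collect_eq continuous_on_const linear_continuous_on
        partial_isometry_bounded_linear[OF assms])
  ultimately show ?thesis by (simp add: closed_csubspace_def)
qed

lemma partial_isometry_split:
  assumes "partial_isometry (S::'a::chilbert_space \<Rightarrow> 'a)"
  obtains a b where "a \<in> ker S" "b \<in> orth (ker S)" "x = a + b" "S x = S b"
proof -
  obtain a b where ab: "a \<in> ker S" "b \<in> orth (ker S)" "x = a + b"
    using orthogonal_decomposition[OF closed_csubspace_ker[OF assms]] by blast
  moreover have "S x = S b"
    using ab clinear_add[OF partial_isometry_clinear[OF assms]] by (simp add: ker_def)
  ultimately show ?thesis using that by blast
qed

lemma csubspace_range: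
  assumes "clinear S"
  shows "csubspace (range S)"
  unfolding csubspace_def
proof (intro conjI ballI allI)
  show "0 \<in> range S" using clinear_zero[OF assms] by (metis rangeI)
  fix x y assume "x \<in> range S" "y \<in> range S"
  then obtain a b where "x = S a" "y = S b" by blast
  then show "x + y \<in> range S" using clinear_add[OF assms, of a b] by (metis rangeI)
next
  fix c x assume "x \<in> range S"
  then obtain a where "x = S a" by blast
  then show "scaleC c x \<in> range S" using clinear_scaleC[OF assms, of c a] by (metis rangeI)
qed

text \<open>The final space of a partial isometry is closed: S maps the complete initial space
  isometrically onto it.\<close>
lemma closed_range_partial_isometry:
  assumes PI: "partial_isometry (S::'a::chilbert_space \<Rightarrow> 'a)"
  shows "closed (range S)"
  unfolding closed_sequential_limits
proof safe
  fix g y assume g: "\<forall>n. g n \<in> range S" "g \<longlonglongrightarrow> y"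
  have "\<exists>h. h \<in> orth (ker S) \<and> S h = g n" for n
  proof -
    obtain z where "g n = S z" using g(1) by blast
    moreover obtain a b where "a \<in> ker S" "b \<in> orth (ker S)" "z = a + b" "S z = S b"
      by (rule partial_isometry_split[OF PI])
    ultimately show ?thesis by auto
  qed
  then obtain h where h: "\<And>n. h n \<in> orth (ker S)" "\<And>n. S (h n) = g n" by metis
  have dist_eq: "dist (h m) (h n) = dist (g m) (g n)" for m n
  proof -
    have "h m - h n \<in> orth (ker S)" by (rule csubspace_diff[OF csubspace_orth h(1) h(1)])
    then have "norm (S (h m - h n)) = norm (h m - h n)" by (rule partial_isometry_isometric[OF PI])
    then show ?thesis
      using h(2) by (simp add: dist_norm clinear_diff[OF partial_isometry_clinear[OF PI]])
  qed
  have "Cauchy g" using g(2) by (rule LIMSEQ_imp_Cauchy)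
  then have "Cauchy h" unfolding Cauchy_def dist_eq .
  then obtain x where x: "h \<longlonglongrightarrow> x" using Cauchy_convergent[of h] unfolding convergent_def by blast
  have "(\<lambda>n. S (h n)) \<longlonglongrightarrow> S x"
    by (rule bounded_linear.tendsto[OF partial_isometry_bounded_linear[OF PI] x])
  then have "y = S x" using h(2) g(2) LIMSEQ_unique by auto
  then show "y \<in> range S" by blast
qed

lemma closed_csubspace_range:
  "partial_isometry (S::'a::chilbert_space \<Rightarrow> 'a) \<Longrightarrow> closed_csubspace (range S)"
  unfolding closed_csubspace_def
  using closed_range_partial_isometry csubspace_range partial_isometry_clinear by blast

section \<open>Unitary operators and their integer powers\<close>

lemma unitary_bij:
  assumes "unitary (U::'a::chilbert_space \<Rightarrow> 'a)"
  shows "bij U"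
proof -
  have U: "clinear U" "\<And>x. norm (U x) = norm x" "surj U" using assms unfolding unitary_def by auto
  have "inj U"
  proof (rule injI)
    fix x y assume "U x = U y"
    then have "norm (U (x - y)) = 0" using clinear_diff[OF U(1)] by simp
    then show "x = y" using U(2) by simp
  qed
  then show ?thesis using U(3) by (simp add: bij_def)
qed

lemma unitary_bounded_linear: "unitary U \<Longrightarrow> bounded_linear U"
  unfolding unitary_def using clinear_bounded_linear[of U 1] by simp

lemma unitary_inv:
  assumes "unitary (U::'a::chilbert_space \<Rightarrow> 'a)"
  shows "unitary (inv U)"
proof -
  have bij: "bij U" by (rule unitary_bij[OF assms])
  have U: "clinear U" "\<And>x. norm (U x) = norm x" using assms unfolding unitary_def by auto
  have "norm (inv U x) = norm x" for x
    using U(2)[of "inv U x"] bij by (simp add: bij_is_surj surj_f_inv_f)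
  moreover have "clinear (inv U)" by (rule clinear_inv[OF U(1) bij])
  moreover have "surj (inv U)" using bij by (simp add: bij_imp_bij_inv bij_is_surj)
  ultimately show ?thesis unfolding unitary_def by blast
qed

lemma unitary_adjoint:
  assumes "unitary (U::'a::chilbert_space \<Rightarrow> 'a)"
  shows "cinner (inv U x) y = cinner x (U y)"
proof -
  have "cinner (U (inv U x)) (U y) = cinner (inv U x) y"
    using assms unfolding unitary_def by (intro polarization) auto
  then show ?thesis
    using unitary_bij[OF assms] by (simp add: bij_is_surj surj_f_inv_f)
qed

lemma unitary_orth_invariant:
  assumes "unitary (U::'a::chilbert_space \<Rightarrow> 'a)" "inv U ` M \<subseteq> M"
  shows "U ` orth M \<subseteq> orth M"
  using orth_invariant_adjoint[OF unitary_adjoint[OF assms(1)] assms(2)] .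

lemma unitary_inv_orth_invariant:
  assumes "unitary (U::'a::chilbert_space \<Rightarrow> 'a)" "U ` M \<subseteq> M"
  shows "inv U ` orth M \<subseteq> orth M"
proof -
  have "inv (inv U) = U" using unitary_bij[OF assms(1)] by (rule inv_inv_eq)
  then show ?thesis using unitary_orth_invariant[OF unitary_inv[OF assms(1)]] assms(2) by simp
qed

lemma zpow_zero [simp]: "zpow U 0 = id"
  by (simp add: zpow_def fun_eq_iff)

lemma zpow_step:
  assumes "bij U"
  shows "U (zpow U n k) = zpow U (n + 1) k"
proof (cases "0 \<le> n")
  case True
  then have "nat (n + 1) = Suc (nat n)" by simp
  then show ?thesis using True by (simp add: zpow_def)
next
  case False
  then have "nat (- n) = Suc (nat (- (n + 1)))" by simp
  then show ?thesis
    using False assms by (simp add: zpow_def bij_is_surj surj_f_inv_f)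
qed

lemma zpow_step_inv:
  assumes "bij U"
  shows "inv U (zpow U n k) = zpow U (n - 1) k"
proof -
  have "zpow U n k = U (zpow U (n - 1) k)" using zpow_step[OF assms, of "n - 1" k] by simp
  then show ?thesis using assms by (metis bij_is_inj inv_f_f)
qed

lemma zpow_clinear:
  assumes "clinear (U::'a::complex_inner \<Rightarrow> 'a)" "bij U"
  shows "clinear (zpow U n)"
proof (cases "0 \<le> n")
  case True
  then have "zpow U n = U ^^ nat n" by (simp add: zpow_def fun_eq_iff)
  then show ?thesis using clinear_funpow[OF assms(1)] by simp
next
  case False
  then have "zpow U n = inv U ^^ nat (- n)" by (simp add: zpow_def fun_eq_iff)
  then show ?thesis using clinear_funpow[OF clinear_inv[OF assms]] by simp
qed

section \<open>The unitary extension and density of the orbit of the defect space\<close>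

definition zorbit :: "('a \<Rightarrow> 'a) \<Rightarrow> 'a set \<Rightarrow> 'a set" where
  "zorbit U K = {zpow U n k | n k. k \<in> K}"

lemma subset_zorbit: "K \<subseteq> zorbit U K"
proof
  fix k assume "k \<in> K"
  then have "zpow U 0 k \<in> zorbit U K" unfolding zorbit_def by blast
  then show "k \<in> zorbit U K" by simp
qed

lemma zorbit_invariant:
  assumes "bij U"
  shows "U ` zorbit U K \<subseteq> zorbit U K" "inv U ` zorbit U K \<subseteq> zorbit U K"
proof -
  have "U (zpow U n k) \<in> zorbit U K" "inv U (zpow U n k) \<in> zorbit U K" if "k \<in> K" for n k
    unfolding zorbit_def zpow_step[OF assms] zpow_step_inv[OF assms] using that by blast+
  then show "U ` zorbit U K \<subseteq> zorbit U K" "inv U ` zorbit U K \<subseteq> zorbit U K"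
    unfolding zorbit_def by blast+
qed

lemma glued_operator_unitary:
  fixes S :: "'a::chilbert_space \<Rightarrow> 'a"
  assumes PI: "partial_isometry S"
    and A: "unitary_between A (ker S) (orth (range S))" and U: "clinear U"
    and US: "\<forall>h\<in>orth (ker S). U h = S h" and UA: "\<forall>h\<in>ker S. U h = A h"
  shows "unitary U"
proof -
  have Aiso: "\<And>x. x \<in> ker S \<Longrightarrow> norm (A x) = norm x" and Aim: "A ` ker S = orth (range S)"
    using A unfolding unitary_between_def by blast+
  have "norm (U x) = norm x" for x
  proof -
    obtain a b where ab: "a \<in> ker S" "b \<in> orth (ker S)" "x = a + b"
      by (rule partial_isometry_split[OF PI])
    have Ux: "U x = A a + S b"
      using ab(1,2) US UA unfolding ab(3) clinear_add[OF U] by simp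
    have "cinner (S b) (A a) = 0" using Aim ab(1) unfolding orth_def by blast
    then have "(norm (U x))^2 = (norm (A a))^2 + (norm (S b))^2"
      unfolding Ux by (rule pythagoras[OF cinner_zero_sym])
    also have "\<dots> = (norm a)^2 + (norm b)^2"
      using Aiso[OF ab(1)] partial_isometry_isometric[OF PI ab(2)] by simp
    also have "\<dots> = (norm x)^2"
    proof -
      have "cinner a b = 0" using ab(1,2) unfolding orth_def by blast
      then show ?thesis unfolding ab(3) by (rule pythagoras[symmetric])
    qed
    finally show ?thesis by (simp add: power2_eq_iff_nonneg)
  qed
  moreover have "y \<in> range U" for y
  proof -
    obtain r k where rk: "r \<in> range S" "k \<in> orth (range S)" "y = r + k"
      using orthogonal_decomposition[OF closed_csubspace_range[OF PI]] by blast
    obtain z where z: "r = S z" using rk(1) by blast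
    obtain a b where b: "a \<in> ker S" "b \<in> orth (ker S)" "z = a + b" "S z = S b"
      by (rule partial_isometry_split[OF PI])
    obtain w where w: "w \<in> ker S" "k = A w" using rk(2) Aim by blast
    have "r = U b" using z b US by simp
    moreover have "k = U w" using w UA by simp
    ultimately have "y = U (b + w)" using rk(3) clinear_add[OF U, of b w] by simp
    then show ?thesis by blast
  qed
  ultimately show ?thesis unfolding unitary_def using U by blast
qed

text \<open>Since U maps ker S onto K, the kernel ker S = U^-1 K lies in every subspace that
  contains K and is invariant under U^-1.\<close>
lemma ker_subset_invariant_subspace:
  fixes S :: "'a::chilbert_space \<Rightarrow> 'a"
  assumes A: "unitary_between A (ker S) (orth (range S))" and U: "unitary U"
    and UA: "\<forall>h\<in>ker S. U h = A h"
    and KM: "orth (range S) \<subseteq> M" and iUM: "inv U ` M \<subseteq> M"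
  shows "ker S \<subseteq> M"
proof
  fix a assume a: "a \<in> ker S"
  have "A a \<in> orth (range S)" using A a unfolding unitary_between_def by blast
  moreover have "A a = U a" using UA a by simp
  then have "a = inv U (A a)" using inv_f_f[OF bij_is_inj[OF unitary_bij[OF U]]] by simp
  ultimately show "a \<in> M" using KM iUM by blast
qed

text \<open>Step 2: if a subspace M contains K and is invariant under U and its inverse, then
  M-perp reduces S and S is unitary on it: M-perp lies in the initial space of S (by the
  previous lemma), where S and U agree.\<close>
lemma orth_invariant_subspace_unitary_part:
  fixes S :: "'a::chilbert_space \<Rightarrow> 'a"
  assumes PI: "partial_isometry S"
    and A: "unitary_between A (ker S) (orth (range S))" and U: "unitary U"
    and US: "\<forall>h\<in>orth (ker S). U h = S h" and UA: "\<forall>h\<in>ker S. U h = A h"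
    and KM: "orth (range S) \<subseteq> M" and UM: "U ` M \<subseteq> M" and iUM: "inv U ` M \<subseteq> M"
  shows "reducing_subspace S (orth M) \<and> unitary_on S (orth M)"
proof -
  define N where "N = orth M"
  have UiU: "U (inv U x) = x" for x
    using unitary_bij[OF U] by (simp add: bij_is_surj surj_f_inv_f)
  have AK: "A a \<in> orth (range S)" if "a \<in> ker S" for a
    using A that unfolding unitary_between_def by blast
  have "ker S \<subseteq> M" by (rule ker_subset_invariant_subspace[OF A U UA KM iUM])
  then have N_initial: "N \<subseteq> orth (ker S)" unfolding N_def by (rule orth_antimono)
  have UN: "U ` N \<subseteq> N" unfolding N_def by (rule unitary_orth_invariant[OF U iUM])
  have iUN: "inv U ` N \<subseteq> N" unfolding N_def by (rule unitary_inv_orth_invariant[OF U UM])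
  have SN: "S ` N \<subseteq> N"
  proof
    fix y assume "y \<in> S ` N"
    then obtain x where "x \<in> N" "y = S x" by blast
    then show "y \<in> N" using UN N_initial US by (metis image_subset_iff subsetD)
  qed
  have SoN: "S ` orth N \<subseteq> orth N"
  proof
    fix y assume "y \<in> S ` orth N"
    then obtain x where x: "x \<in> orth N" "y = S x" by blast
    obtain a b where ab: "a \<in> ker S" "b \<in> orth (ker S)" "x = a + b" "S x = S b"
      by (rule partial_isometry_split[OF PI])
    have y: "y = U x - A a"
      using x ab US UA clinear_add[of U a b] U unfolding unitary_def by simp
    have "U x \<in> orth N" using unitary_orth_invariant[OF U iUN] x(1) by blast
    moreover have "A a \<in> orth N" using AK[OF ab(1)] KM orth_orth_sup[of M] unfolding N_def by blast
    ultimately show "y \<in> orth N" using y csubspace_diff[OF csubspace_orth] by simp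
  qed
  have "unitary_on S N" unfolding unitary_on_def
  proof safe
    fix x assume "x \<in> N"
    then show "norm (S x) = norm x" using N_initial partial_isometry_isometric[OF PI] by blast
  next
    fix x assume "x \<in> N"
    then show "S x \<in> N" using SN by blast
  next
    fix x assume x: "x \<in> N"
    then have "inv U x \<in> N" using iUN by blast
    moreover have "S (inv U x) = x" using calculation N_initial US UiU by (metis subsetD)
    ultimately show "x \<in> S ` N" by (metis image_eqI)
  qed
  moreover have "reducing_subspace S N"
    unfolding reducing_subspace_def N_def using closed_csubspace_orth SN SoN N_def by blast
  ultimately show ?thesis by (simp add: N_def)
qed

lemma glued_operator_orbit_dense:
  fixes S :: "'a::chilbert_space \<Rightarrow> 'a"
  assumes PI: "partial_isometry S" and CNU: "completely_nonunitary S"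
    and A: "unitary_between A (ker S) (orth (range S))" and Ul: "clinear U"
    and US: "\<forall>h\<in>orth (ker S). U h = S h" and UA: "\<forall>h\<in>ker S. U h = A h"
  shows "unitary U \<and> closure (cspan (zorbit U (orth (range S)))) = UNIV"
proof -
  define M where "M = closure (cspan (zorbit U (orth (range S))))"
  have U: "unitary U" by (rule glued_operator_unitary[OF PI A Ul US UA])
  have bij: "bij U" by (rule unitary_bij[OF U])
  have iU: "unitary (inv U)" by (rule unitary_inv[OF U])
  have U_M: "U ` M \<subseteq> M"
    unfolding M_def using Ul zorbit_invariant(1)[OF bij]
    by (intro closure_cspan_invariant unitary_bounded_linear[OF U])
  have iU_M: "inv U ` M \<subseteq> M"
    unfolding M_def using iU zorbit_invariant(2)[OF bij] unfolding unitary_def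
    by (intro closure_cspan_invariant unitary_bounded_linear[OF iU]) blast+
  have "orth (range S) \<subseteq> zorbit U (orth (range S))" by (rule subset_zorbit)
  also have "\<dots> \<subseteq> cspan (zorbit U (orth (range S)))" by (rule cspan_superset)
  also have "\<dots> \<subseteq> M" unfolding M_def by (rule closure_subset)
  finally have "reducing_subspace S (orth M) \<and> unitary_on S (orth M)"
    using U_M iU_M by (rule orth_invariant_subspace_unitary_part[OF PI A U US UA])
  then have "orth M = {0}" using CNU unfolding completely_nonunitary_def by blast
  moreover have "closed_csubspace M" unfolding M_def by (rule closed_csubspace_closure_cspan)
  ultimately have "M = UNIV" using orth_zero_imp_UNIV by blast
  then show ?thesis using U unfolding M_def by simp
qed

section \<open>One-dimensional defect spaces\<close>

lemma orthonormal_basis_csubspace: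
  assumes "orthonormal_basis V B"
  shows "csubspace V"
proof -
  have "closure (cspan B) = V" using assms unfolding orthonormal_basis_def by blast
  moreover have "csubspace (closure (cspan B))" by (rule csubspace_closure[OF csubspace_cspan])
  ultimately show ?thesis by simp
qed

lemma closure_cspan_unit_vector:
  fixes b :: "'a::complex_inner"
  assumes bb: "cinner b b = 1" and y: "y \<in> closure (cspan {b})"
  shows "y = scaleC (cinner b y) b"
proof -
  define Z where "Z = {y::'a. y - scaleC (cinner b y) b = 0}"
  have "closed Z" unfolding Z_def
  proof (intro closed_Collect_eq continuous_on_const continuous_on_diff continuous_on_id)
    show "continuous_on UNIV (\<lambda>y. scaleC (cinner b y) b)"
      by (rule continuous_on_compose2[OF continuous_scaleC_left[of b]
          linear_continuous_on[OF bounded_bilinear.bounded_linear_right[OF bounded_bilinear_cinner]]])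
        auto
  qed
  moreover have "cspan {b} \<subseteq> Z"
  proof
    fix y assume "y \<in> cspan {b}"
    then obtain F c where F: "F \<subseteq> {b}" "y = (\<Sum>x\<in>F. scaleC (c x) x)" unfolding cspan_def by auto
    then have "F = {} \<or> F = {b}" by blast
    then show "y \<in> Z"
    proof
      assume "F = {}" then show ?thesis using F by (simp add: Z_def)
    next
      assume "F = {b}" then have "y = scaleC (c b) b" using F by simp
      then show ?thesis by (simp add: Z_def cinner_scaleC_right bb)
    qed
  qed
  ultimately have "closure (cspan {b}) \<subseteq> Z" by (rule closure_minimal[rotated])
  then show ?thesis using y unfolding Z_def by auto
qed

lemma dim_one_line:
  fixes V :: "'a::chilbert_space set"
  assumes "hilbert_dim_one V" "u \<in> V" "norm u = 1" "x \<in> V"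
  shows "\<exists>c. x = scaleC c u"
proof -
  obtain B where B: "orthonormal_basis V B" "card B = 1"
    using assms(1) unfolding hilbert_dim_one_def by blast
  then obtain b where "B = {b}" using card_1_singletonE by blast
  then have V: "closure (cspan {b}) = V" and bb: "cinner b b = 1"
    using B(1) unfolding orthonormal_basis_def by auto
  have u: "u = scaleC (cinner b u) b" and x: "x = scaleC (cinner b x) b"
    using closure_cspan_unit_vector[OF bb] V assms(2,4) by auto
  have "(norm b)^2 = 1" using norm_sq_cinner[of b] bb by simp
  then have "norm b = 1" using norm_ge_zero[of b] by (simp add: power2_eq_1_iff)
  then have "cmod (cinner b u) = 1" using assms(3) norm_scaleC[of "cinner b u" b] u by simp
  then have "cinner b u \<noteq> 0" by auto
  then have "x = scaleC (cinner b x / cinner b u) u"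
    by (subst u) (simp add: scaleC_scaleC x[symmetric])
  then show ?thesis by blast
qed

lemma dim_one_unitary_between:
  fixes V W :: "'a::chilbert_space set"
  assumes V: "hilbert_dim_one V" "u \<in> V" "norm u = 1"
    and W: "hilbert_dim_one W" "w \<in> W" "norm w = 1"
    and T: "clinear T" "T u = w"
  shows "unitary_between T V W"
proof -
  have subW: "csubspace W" and subV: "csubspace V"
    using V(1) W(1) orthonormal_basis_csubspace unfolding hilbert_dim_one_def by blast+
  have Tc: "T (scaleC c u) = scaleC c w" for c using clinear_scaleC[OF T(1)] T(2) by simp
  have "norm (T x) = norm x \<and> T x \<in> W" if x: "x \<in> V" for x
  proof -
    obtain c where "x = scaleC c u" using dim_one_line[OF V x] by blast
    moreover have "scaleC c w \<in> W" using subW W(2) unfolding csubspace_def by blast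
    ultimately show ?thesis using Tc V(3) W(3) by (simp add: norm_scaleC)
  qed
  then have "norm (T x) = norm x" "T x \<in> W" if "x \<in> V" for x
    using that by blast+
  moreover have "T ` V \<subseteq> W" using calculation(2) by blast
  moreover have "W \<subseteq> T ` V"
  proof
    fix y assume "y \<in> W"
    then obtain c where "y = scaleC c w" using dim_one_line[OF W] by blast
    moreover have "scaleC c u \<in> V" using subV V(2) unfolding csubspace_def by blast
    ultimately show "y \<in> T ` V" using Tc by (metis image_eqI)
  qed
  ultimately show ?thesis
    unfolding unitary_between_def using clinear_add[OF T(1)] clinear_scaleC[OF T(1)] by blast
qed

lemma zorbit_of_line:
  assumes U: "clinear (U::'a::complex_inner \<Rightarrow> 'a)" "bij U"
    and line: "\<And>x. x \<in> K \<Longrightarrow> \<exists>c. x = scaleC c k"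
  shows "zorbit U K \<subseteq> cspan (zorbit U {k})"
proof
  fix y assume "y \<in> zorbit U K"
  then obtain n x where y: "y = zpow U n x" "x \<in> K" unfolding zorbit_def by blast
  obtain c where "x = scaleC c k" using line y(2) by blast
  then have "y = scaleC c (zpow U n k)" using y clinear_scaleC[OF zpow_clinear[OF U]] by simp
  moreover have "zpow U n k \<in> zorbit U {k}" unfolding zorbit_def by blast
  then have "zpow U n k \<in> cspan (zorbit U {k})" by (rule subsetD[OF cspan_superset])
  ultimately show "y \<in> cspan (zorbit U {k})"
    using csubspace_cspan unfolding csubspace_def by blast
qed

theorem mainTheorem4:
  fixes S :: "'a::chilbert_space \<Rightarrow> 'a"
  assumes "partial_isometry S"
    and "completely_nonunitary S"
    and "same_hilbert_dim (orth (range S)) (ker S)"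
  shows "(\<forall>A U. unitary_between A (ker S) (orth (range S)) \<and> clinear U \<and>
            (\<forall>h\<in>orth (ker S). U h = S h) \<and> (\<forall>h\<in>ker S. U h = A h) \<longrightarrow>
            unitary U \<and>
            closure (cspan {zpow U n k | n k. k \<in> orth (range S)}) = UNIV)
       \<and> (hilbert_dim_one (orth (range S)) \<and> hilbert_dim_one (ker S) \<longrightarrow>
            (\<forall>k \<alpha> kt U. k \<in> orth (range S) \<and> norm k = 1 \<and> cmod \<alpha> = 1 \<and>
               kt \<in> ker S \<and> norm kt = 1 \<and> clinear U \<and>
               (\<forall>h\<in>orth (ker S). U h = S h) \<and> U kt = scaleC \<alpha> k \<longrightarrow>
               closure (cspan {zpow U n k | n. True}) = UNIV))"
proof (rule conjI; intro allI impI; elim conjE)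
  fix A U
  assume "unitary_between A (ker S) (orth (range S))" "clinear U"
    "\<forall>h\<in>orth (ker S). U h = S h" "\<forall>h\<in>ker S. U h = A h"
  then show "unitary U \<and> closure (cspan {zpow U n k | n k. k \<in> orth (range S)}) = UNIV"
    using glued_operator_orbit_dense[OF assms(1,2)] unfolding zorbit_def by blast
next
  fix k \<alpha> kt U
  assume dimK: "hilbert_dim_one (orth (range S))" and dimker: "hilbert_dim_one (ker S)"
    and k: "k \<in> orth (range S)" "norm k = 1" and \<alpha>: "cmod \<alpha> = 1"
    and kt: "kt \<in> ker S" "norm kt = 1" and U: "clinear U"
    and US: "\<forall>h\<in>orth (ker S). U h = S h" and Ukt: "U kt = scaleC \<alpha> k"
  have "scaleC \<alpha> k \<in> orth (range S)" using k(1) csubspace_orth unfolding csubspace_def by blast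
  then have "unitary_between U (ker S) (orth (range S))"
    using dim_one_unitary_between[OF dimker kt dimK _ _ U Ukt] k(2) \<alpha> by (simp add: norm_scaleC)
  then have dense: "unitary U \<and> closure (cspan (zorbit U (orth (range S)))) = UNIV"
    using glued_operator_orbit_dense[OF assms(1,2) _ U US] by blast
  then have "zorbit U (orth (range S)) \<subseteq> cspan (zorbit U {k})"
    using zorbit_of_line[OF U unitary_bij] dim_one_line[OF dimK k] by blast
  then have "closure (cspan (zorbit U (orth (range S)))) \<subseteq> closure (cspan (zorbit U {k}))"
    by (intro closure_mono cspan_minimal csubspace_cspan)
  moreover have "zorbit U {k} = {zpow U n k | n. True}" unfolding zorbit_def by blast
  ultimately show "closure (cspan {zpow U n k | n. True}) = UNIV" using dense by auto
qed

end
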